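(* With the reduced expression $t(\lambda_-)=u\,s_{\ell_1}\cdots s_{\ell_L}$ and roots $\tilde\beta_k$ as in the context, for every $1\le k\le M$ one has $w_\circ\overline{\tilde\beta_k}=\beta_k^\vee$, where $\beta_k=s_{i_N}\cdots s_{i_{k+1}}\alpha_{i_k}$.
   Context: Setting: $\mathfrak g$ finite-dimensional simple Lie algebra, simple roots $\{\alpha_i\}_{i\in I}$, simple coroots $\{\alpha_i^\vee\}$, roots $\Delta=\Delta^+\sqcup\Delta^-$, weights $P$, dominant weights $P^+$, Weyl group $W$, longest element $w_\circ$. For $\lambda\in P^+$: $S=\{i:\langle\lambda,\alpha_i^\vee\rangle=0\}$, $W_S=\langle s_i:i\in S\rangle$ with longest element $w_\circ^S$, $\Delta^+_S$ the positive roots in $\sum_{i\in S}\mathbb Z\alpha_i$; $\lambda_-=w_\circ\lambda$; $v(\lambda_-)$ the minimal-length element of $\{x\in W: x\lambda=\lambda_-\}$, so $w_\circ=v(\lambda_-)w_\circ^S$ with lengths adding. Fix reduced expressions $v(\lambda_-)=s_{i_1}\cdots s_{i_M}$ and $w_\circ^S=s_{i_{M+1}}\cdots s_{i_N}$, so $w_\circ=s_{i_1}\cdots s_{i_N}$ is reduced; put $\beta_j=s_{i_N}\cdots s_{i_{j+1}}\alpha_{i_j}$; then $\Delta^+\setminus\Delta^+_S=\{\beta_1,\dots,\beta_M\}$, and the total order $\prec$ on $\Delta^+$ is $\beta_1\succ\beta_2\succ\dots\succ\beta_N$. Affine: real roots of the untwisted affinization of the dual root system $\widetilde\Delta_{\rm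 aff}=\{\alpha^\vee+a\tilde\delta\}$, positive ones $\widetilde\Delta^+_{\rm aff}$ ($a>0$, or $a=0,\alpha\in\Delta^+$), $\widetilde\Delta^-_{\rm aff}=-\widetilde\Delta^+_{\rm aff}$; simple roots $\alpha_i^\vee$ ($i\in I$), $\alpha_0^\vee=\tilde\delta-\varphi^\vee$ ($\varphi$ highest short root), $I_{\rm aff}=I\sqcup\{0\}$; $\beta=\bar\beta+\deg(\beta)\tilde\delta$ with $\bar\beta\in\mathfrak h$. $W_{\rm ext}=t(P)\rtimes W$ acting by $v\,t(\nu)(\bar\beta+r\tilde\delta)=v\bar\beta+(r-\langle\nu,\bar\beta\rangle)\tilde\delta$; $\ell(x)=\#(\widetilde\Delta^+_{\rm aff}\cap x^{-1}\widetilde\Delta^-_{\rm aff})$; $\Omega$ the length-zero elements. The map $\Phi:\widetilde\Delta^+_{\rm aff}\cap t(\lambda_-)^{-1}\widetilde\Delta^-_{\rm aff}\to\mathbb Q_{\ge0}\times(\Delta^+\setminus\Delta^+_S)$, $\Phi(\beta)=\Big(\frac{\langle\lambda_-,\bar\beta\rangle-\deg(\beta)}{\langle\lambda_-,\bar\beta\rangle},\,w_\circ(\bar\beta)^\vee\Big)$ (where $(\alpha^\vee)^\vee=\alpha$) is injective. Order the target lexicographically: $(a,\alpha)<(b,\beta)$ iff $a<b$, or $a=b$ and $\alpha\succ\beta$; $\prec'$ is the pullback order. The reduced expression $t(\lambda_-)=u\,s_{\ell_1}\cdots s_{\ell_L}$ ($u\in\Omega$, $\ell_k\in I_{\rm aff}$)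 is the unique one with $\tilde\beta_j:=s_{\ell_L}\cdots s_{\ell_{j+1}}\alpha^\vee_{\ell_j}$ satisfying $\tilde\beta_1\prec'\dots\prec'\tilde\beta_L$ exhausting $\widetilde\Delta^+_{\rm aff}\cap t(\lambda_-)^{-1}\widetilde\Delta^-_{\rm aff}$. *)

theory Defs
  imports "HOL-Analysis.Analysis"
begin

text \<open>Coroot of a vector: x^vee = 2x/(x,x); note (a^vee)^vee = a.
  The pairing of a weight with a coroot is the inner product.\<close>
definition coroot :: "'a::real_inner \<Rightarrow> 'a" where
  "coroot x = (2 / (x \<bullet> x)) *\<^sub>R x"

definition refl :: "'a::real_inner \<Rightarrow> 'a \<Rightarrow> 'a" where
  "refl a x = x - (x \<bullet> coroot a) *\<^sub>R a"

definition root_system :: "'a::euclidean_space set \<Rightarrow> bool" where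
  "root_system R \<longleftrightarrow> finite R \<and> R \<noteq> {} \<and> 0 \<notin> R \<and> span R = UNIV \<and>
     (\<forall>a\<in>R. \<forall>b\<in>R. refl a b \<in> R) \<and>
     (\<forall>a\<in>R. \<forall>b\<in>R. b \<bullet> coroot a \<in> \<int>) \<and>
     (\<forall>a\<in>R. \<forall>c. c *\<^sub>R a \<in> R \<longrightarrow> c = 1 \<or> c = -1)"

definition irreducible_rs :: "'a::euclidean_space set \<Rightarrow> bool" where
  "irreducible_rs R \<longleftrightarrow> \<not> (\<exists>A B. A \<noteq> {} \<and> B \<noteq> {} \<and> A \<union> B = R \<and>
                              (\<forall>a\<in>A. \<forall>b\<in>B. a \<bullet> b = 0))"

definition nonneg_comb :: "'i set \<Rightarrow> ('i \<Rightarrow> 'a::real_vector) \<Rightarrow> 'a \<Rightarrow> bool" where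
  "nonneg_comb I al x \<longleftrightarrow>
     (\<exists>c::'i \<Rightarrow> int. (\<forall>i\<in>I. c i \<ge> 0) \<and> x = (\<Sum>i\<in>I. of_int (c i) *\<^sub>R al i))"

definition is_base :: "'a::euclidean_space set \<Rightarrow> 'i set \<Rightarrow> ('i \<Rightarrow> 'a) \<Rightarrow> bool" where
  "is_base R I al \<longleftrightarrow> finite I \<and> inj_on al I \<and> al ` I \<subseteq> R \<and> independent (al ` I) \<and>
     (\<forall>b\<in>R. nonneg_comb I al b \<or> nonneg_comb I al (- b))"

definition pos_roots :: "'a::euclidean_space set \<Rightarrow> 'i set \<Rightarrow> ('i \<Rightarrow> 'a) \<Rightarrow> 'a set" where
  "pos_roots R I al = {b \<in> R. nonneg_comb I al b}"

definition wprod :: "('i \<Rightarrow> 'a::real_inner) \<Rightarrow> 'i list \<Rightarrow> 'a \<Rightarrow> 'a" where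
  "wprod al ws = foldr (\<lambda>i f. refl (al i) \<circ> f) ws id"

definition weyl :: "'i set \<Rightarrow> ('i \<Rightarrow> 'a::real_inner) \<Rightarrow> ('a \<Rightarrow> 'a) set" where
  "weyl J al = {wprod al ws | ws. set ws \<subseteq> J}"

definition wlen :: "'i set \<Rightarrow> ('i \<Rightarrow> 'a::real_inner) \<Rightarrow> ('a \<Rightarrow> 'a) \<Rightarrow> nat" where
  "wlen J al w = (LEAST n. \<exists>ws. set ws \<subseteq> J \<and> length ws = n \<and> wprod al ws = w)"

definition reduced_expr :: "'i set \<Rightarrow> ('i \<Rightarrow> 'a::real_inner) \<Rightarrow> 'i list \<Rightarrow> ('a \<Rightarrow> 'a) \<Rightarrow> bool" where
  "reduced_expr J al ws w \<longleftrightarrow> set ws \<subseteq> J \<and> wprod al ws = w \<and> length ws = wlen J al w"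

definition longest :: "'i set \<Rightarrow> ('i \<Rightarrow> 'a::real_inner) \<Rightarrow> 'a \<Rightarrow> 'a" where
  "longest J al = (THE w. w \<in> weyl J al \<and> (\<forall>x\<in>weyl J al. wlen J al x \<le> wlen J al w))"

definition weights :: "'i set \<Rightarrow> ('i \<Rightarrow> 'a::real_inner) \<Rightarrow> 'a set" where
  "weights I al = {x. \<forall>i\<in>I. x \<bullet> coroot (al i) \<in> \<int>}"

definition dominant :: "'i set \<Rightarrow> ('i \<Rightarrow> 'a::real_inner) \<Rightarrow> 'a set" where
  "dominant I al = {x \<in> weights I al. \<forall>i\<in>I. x \<bullet> coroot (al i) \<ge> 0}"

definition stab_set :: "'i set \<Rightarrow> ('i \<Rightarrow> 'a::real_inner) \<Rightarrow> 'a \<Rightarrow> 'i set" where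
  "stab_set I al lam = {i \<in> I. lam \<bullet> coroot (al i) = 0}"

definition min_rep :: "'i set \<Rightarrow> ('i \<Rightarrow> 'a::real_inner) \<Rightarrow> 'a \<Rightarrow> 'a \<Rightarrow> 'a \<Rightarrow> 'a" where
  "min_rep I al lam mu = (THE x. x \<in> weyl I al \<and> x lam = mu \<and>
      (\<forall>y\<in>weyl I al. y lam = mu \<longrightarrow> wlen I al x \<le> wlen I al y))"

text \<open>beta_k = s_{i_N} ... s_{i_{k+1}} alpha_{i_k}  (k is 1-based; is = [i_1,...,i_N]).\<close>
definition beta_root :: "('i \<Rightarrow> 'a::real_inner) \<Rightarrow> 'i list \<Rightarrow> nat \<Rightarrow> 'a" where
  "beta_root al is k = wprod al (rev (drop k is)) (al (is ! (k - 1)))"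

definition succ_ord :: "('i \<Rightarrow> 'a::real_inner) \<Rightarrow> 'i list \<Rightarrow> 'a \<Rightarrow> 'a \<Rightarrow> bool" where
  "succ_ord al is a b \<longleftrightarrow> (\<exists>j k. 1 \<le> j \<and> j < k \<and> k \<le> length is \<and>
       beta_root al is j = a \<and> beta_root al is k = b)"

definition highest_short_root :: "'a::euclidean_space set \<Rightarrow> 'i set \<Rightarrow> ('i \<Rightarrow> 'a) \<Rightarrow> 'a" where
  "highest_short_root R I al = (THE p. p \<in> R \<and> (\<forall>g\<in>R. p \<bullet> p \<le> g \<bullet> g) \<and>
      (\<forall>g\<in>R. g \<bullet> g = p \<bullet> p \<longrightarrow> nonneg_comb I al (p - g)))"

text \<open>An element bar(beta) + r tilde(delta) is represented by the pair (bar(beta), r).\<close>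
definition aff_roots :: "'a::euclidean_space set \<Rightarrow> ('a \<times> real) set" where
  "aff_roots R = {(coroot a, of_int n) | a n. a \<in> R}"

definition aff_pos :: "'a::euclidean_space set \<Rightarrow> 'i set \<Rightarrow> ('i \<Rightarrow> 'a) \<Rightarrow> ('a \<times> real) set" where
  "aff_pos R I al = {(coroot a, of_int n) | a n. a \<in> R \<and>
                      (n > 0 \<or> (n = 0 \<and> a \<in> pos_roots R I al))}"

definition aff_neg :: "'a::euclidean_space set \<Rightarrow> 'i set \<Rightarrow> ('i \<Rightarrow> 'a) \<Rightarrow> ('a \<times> real) set" where
  "aff_neg R I al = {(- b, - r) | b r. (b, r) \<in> aff_pos R I al}"

text \<open>Action of v t(nu): bar(beta) + r delta  |->  v bar(beta) + (r - <nu, bar(beta)>) delta.\<close>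
definition ext_act :: "('a::real_inner \<Rightarrow> 'a) \<Rightarrow> 'a \<Rightarrow> 'a \<times> real \<Rightarrow> 'a \<times> real" where
  "ext_act v nu x = (v (fst x), snd x - nu \<bullet> fst x)"

definition W_ext :: "'i set \<Rightarrow> ('i \<Rightarrow> 'a::real_inner) \<Rightarrow> ('a \<times> real \<Rightarrow> 'a \<times> real) set" where
  "W_ext I al = {ext_act v nu | v nu. v \<in> weyl I al \<and> nu \<in> weights I al}"

definition aff_len :: "'a::euclidean_space set \<Rightarrow> 'i set \<Rightarrow> ('i \<Rightarrow> 'a)
                        \<Rightarrow> ('a \<times> real \<Rightarrow> 'a \<times> real) \<Rightarrow> nat" where
  "aff_len R I al x = card {b \<in> aff_pos R I al. x b \<in> aff_neg R I al}"

definition Omega :: "'a::euclidean_space set \<Rightarrow> 'i set \<Rightarrow> ('i \<Rightarrow> 'a)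
                        \<Rightarrow> ('a \<times> real \<Rightarrow> 'a \<times> real) set" where
  "Omega R I al = {x \<in> W_ext I al. aff_len R I al x = 0}"

text \<open>Affine simple roots: Some i |-> alpha_i^vee, None (the node 0) |-> tilde(delta) - phi^vee.\<close>
definition aff_simple :: "('i \<Rightarrow> 'a::real_inner) \<Rightarrow> 'a \<Rightarrow> 'i option \<Rightarrow> 'a \<times> real" where
  "aff_simple al phi j = (case j of Some i \<Rightarrow> (coroot (al i), 0) | None \<Rightarrow> (- coroot phi, 1))"

definition aff_refl :: "'a::real_inner \<times> real \<Rightarrow> 'a \<times> real \<Rightarrow> 'a \<times> real" where
  "aff_refl b x = (fst x - (fst x \<bullet> coroot (fst b)) *\<^sub>R fst b,
                   snd x - (fst x \<bullet> coroot (fst b)) * snd b)"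

definition aprod :: "('i \<Rightarrow> 'a::real_inner) \<Rightarrow> 'a \<Rightarrow> 'i option list \<Rightarrow> 'a \<times> real \<Rightarrow> 'a \<times> real" where
  "aprod al phi ls = foldr (\<lambda>j f. aff_refl (aff_simple al phi j) \<circ> f) ls id"

text \<open>tilde(beta)_j = s_{l_L} ... s_{l_{j+1}} alpha^vee_{l_j}  (j 1-based).\<close>
definition tbeta :: "('i \<Rightarrow> 'a::real_inner) \<Rightarrow> 'a \<Rightarrow> 'i option list \<Rightarrow> nat \<Rightarrow> 'a \<times> real" where
  "tbeta al phi ls j = aprod al phi (rev (drop j ls)) (aff_simple al phi (ls ! (j - 1)))"

definition Phi :: "'a::real_inner \<Rightarrow> ('a \<Rightarrow> 'a) \<Rightarrow> 'a \<times> real \<Rightarrow> real \<times> 'a" where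
  "Phi lamm w0 b = ((lamm \<bullet> fst b - snd b) / (lamm \<bullet> fst b), coroot (w0 (fst b)))"

definition prec' :: "('i \<Rightarrow> 'a::real_inner) \<Rightarrow> 'i list \<Rightarrow> 'a \<Rightarrow> ('a \<Rightarrow> 'a)
                       \<Rightarrow> 'a \<times> real \<Rightarrow> 'a \<times> real \<Rightarrow> bool" where
  "prec' al is lamm w0 x y \<longleftrightarrow>
     fst (Phi lamm w0 x) < fst (Phi lamm w0 y) \<or>
     (fst (Phi lamm w0 x) = fst (Phi lamm w0 y) \<and>
      succ_ord al is (snd (Phi lamm w0 x)) (snd (Phi lamm w0 y)))"

end

theory Submission
  imports Defs
begin

text \<open>An affine root \<open>a\<^sup>\<or> + n\<delta>\<close> is an inversion of \<open>t(\<lambda>\<^sub>-)\<close> iff \<open>0 \<le> n \<le> \<langle>\<lambda>\<^sub>-, a\<^sup>\<or>\<rangle>\<close>, where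
  \<open>n = 0\<close> requires \<open>a\<close> positive and \<open>n = \<langle>\<lambda>\<^sub>-, a\<^sup>\<or>\<rangle>\<close> requires \<open>a\<close> negative. Hence the first
  coordinate of \<open>\<Phi>\<close> is nonnegative on inversions and vanishes exactly on the
  \<open>a\<^sup>\<or> + \<langle>\<lambda>\<^sub>-, a\<^sup>\<or>\<rangle>\<delta>\<close> with \<open>a\<close> negative and \<open>\<langle>\<lambda>\<^sub>-, a\<^sup>\<or>\<rangle> > 0\<close>. The longest element \<open>w\<^sub>\<circ>\<close>
  maps these \<open>a\<close> bijectively onto the positive roots outside the span of the stabiliser of \<open>\<lambda>\<close>,
  which form the inversion set \<open>{\<beta>\<^sub>1, \<dots>, \<beta>\<^sub>M}\<close> of \<open>v(\<lambda>\<^sub>-)\<close> because \<open>w\<^sub>\<circ> = v(\<lambda>\<^sub>-) w\<^sub>\<circ>\<^sup>S\<close>.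
  Consequently a \<open>\<prec>'\<close>-sorted enumeration of the inversions of \<open>t(\<lambda>\<^sub>-)\<close> begins with these \<open>M\<close>
  roots, ordered by their second \<open>\<Phi>\<close>-coordinates along \<open>\<beta>\<^sub>1 \<succ> \<dots> \<succ> \<beta>\<^sub>M\<close>; so the second
  coordinate of the \<open>k\<close>-th one is \<open>\<beta>\<^sub>k\<close>.\<close>

section \<open>Coroots, reflections and words in reflections\<close>

lemma coroot_coroot [simp]: "coroot (coroot x) = (x::'a::real_inner)"
proof (cases "x = 0")
  case False
  then have "x \<bullet> x \<noteq> 0" by simp
  then show ?thesis unfolding coroot_def by (simp add: field_simps)
qed (simp add: coroot_def)

lemma coroot_minus [simp]: "coroot (- x) = - coroot (x::'a::real_inner)"
  by (simp add: coroot_def)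

lemma coroot_inject: "coroot x = coroot y \<Longrightarrow> x = (y::'a::real_inner)"
  by (metis coroot_coroot)

lemma inner_coroot_self: "x \<noteq> 0 \<Longrightarrow> x \<bullet> coroot x = 2"
  by (simp add: coroot_def)

lemma inner_coroot_eq_0_iff: "y \<bullet> coroot x = 0 \<longleftrightarrow> y \<bullet> x = 0"
  by (cases "x = 0") (simp_all add: coroot_def)

lemma inner_coroot_pos_iff: "y \<bullet> coroot x > 0 \<longleftrightarrow> y \<bullet> x > 0"
proof (cases "x = 0")
  case False
  have "\<not> x \<bullet> x < 0" by (simp add: not_less)
  then show ?thesis using False by (auto simp add: coroot_def zero_less_divide_iff)
qed (simp add: coroot_def)

lemma orthogonal_transformation_refl: "orthogonal_transformation (refl a)"
  unfolding orthogonal_transformation_def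
proof (intro conjI allI)
  show "linear (refl a)"
    unfolding refl_def by (auto intro!: linearI simp: inner_add_left algebra_simps)
  fix x y show "refl a x \<bullet> refl a y = x \<bullet> y"
  proof (cases "a = 0")
    case False
    then have "a \<bullet> a \<noteq> 0" by simp
    then show ?thesis unfolding refl_def coroot_def
      by (simp add: inner_diff_left inner_diff_right algebra_simps inner_commute)
  qed (simp add: refl_def coroot_def)
qed

lemma refl_refl [simp]: "refl a (refl a x) = x"
proof (cases "a = 0")
  case False
  then have "a \<bullet> coroot a = 2" by (rule inner_coroot_self)
  then show ?thesis unfolding refl_def by (simp add: inner_diff_left algebra_simps)
qed (simp add: refl_def coroot_def)

lemma refl_self [simp]: "a \<noteq> 0 \<Longrightarrow> refl a a = - a"
  by (simp add: refl_def inner_coroot_self scaleR_2)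

lemma orthogonal_transformation_coroot:
  "orthogonal_transformation f \<Longrightarrow> f (coroot x) = coroot (f x)"
  unfolding coroot_def by (simp add: orthogonal_transformation_def linear_scale)

lemma orthogonal_transformation_minus:
  "orthogonal_transformation f \<Longrightarrow> f (- x) = - f x"
  by (simp add: orthogonal_transformation_def linear_neg)

lemma orthogonal_transformation_inner:
  "orthogonal_transformation f \<Longrightarrow> f x \<bullet> f y = x \<bullet> y"
  by (simp add: orthogonal_transformation_def)

lemma orthogonal_transformation_comp_refl:
  assumes "orthogonal_transformation f"
  shows "f \<circ> refl a = refl (f a) \<circ> f"
proof
  have lin: "linear f" using assms by (rule orthogonal_transformation_linear)
  show "(f \<circ> refl a) x = (refl (f a) \<circ> f) x" for x
    using assms by (simp add: refl_def linear_diff[OF lin] linear_scale[OF lin]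
        orthogonal_transformation_coroot[symmetric] orthogonal_transformation_inner)
qed

lemma wprod_Nil [simp]: "wprod al [] = id"
  by (simp add: wprod_def)

lemma wprod_Cons [simp]: "wprod al (i # ws) = refl (al i) \<circ> wprod al ws"
  by (simp add: wprod_def)

lemma wprod_append: "wprod al (xs @ ys) = wprod al xs \<circ> wprod al ys"
  by (induction xs) (auto simp: o_assoc)

lemma wprod_snoc: "wprod al (xs @ [j]) = wprod al xs \<circ> refl (al j)"
  by (simp add: wprod_append)

lemma orthogonal_transformation_wprod: "orthogonal_transformation (wprod al ws)"
proof (induction ws)
  case (Cons i ws)
  show ?case
    unfolding wprod_Cons by (rule orthogonal_transformation_compose[OF orthogonal_transformation_refl Cons.IH])
qed (simp add: id_def)

lemma wprod_rev_apply [simp]: "wprod al (rev ws) (wprod al ws x) = x"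
  by (induction ws arbitrary: x) (auto simp: wprod_snoc)

lemma wprod_apply_rev [simp]: "wprod al ws (wprod al (rev ws) x) = x"
  using wprod_rev_apply[of al "rev ws"] by simp

lemma weyl_wprod: "set ws \<subseteq> J \<Longrightarrow> wprod al ws \<in> weyl J al"
  by (auto simp: weyl_def)

lemma weyl_comp:
  assumes "v \<in> weyl J al" "w \<in> weyl J al" shows "v \<circ> w \<in> weyl J al"
proof -
  obtain xs ys where "set xs \<subseteq> J" "v = wprod al xs" "set ys \<subseteq> J" "w = wprod al ys"
    using assms by (auto simp: weyl_def)
  then show ?thesis using weyl_wprod[of "xs @ ys" J al] by (simp add: wprod_append)
qed

lemma weyl_comp_refl: "j \<in> J \<Longrightarrow> w \<in> weyl J al \<Longrightarrow> w \<circ> refl (al j) \<in> weyl J al"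
  using weyl_comp[where v = w and w = "refl (al j)"] weyl_wprod[of "[j]" J al] by simp

lemma weyl_mono: "J \<subseteq> K \<Longrightarrow> w \<in> weyl J al \<Longrightarrow> w \<in> weyl K al"
  by (auto simp: weyl_def)

lemma orthogonal_transformation_weyl: "w \<in> weyl J al \<Longrightarrow> orthogonal_transformation w"
  by (auto simp: weyl_def orthogonal_transformation_wprod)

lemma weyl_inverse:
  assumes "w \<in> weyl J al"
  obtains v where "v \<in> weyl J al" "\<And>x. v (w x) = x" "\<And>x. w (v x) = x"
proof -
  obtain ws where "set ws \<subseteq> J" "w = wprod al ws" using assms by (auto simp: weyl_def)
  moreover have "wprod al (rev ws) \<in> weyl J al" using calculation(1) by (intro weyl_wprod) simp
  ultimately show thesis using that[where v = "wprod al (rev ws)"] by simp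
qed

lemma wlen_le_length: "set ws \<subseteq> J \<Longrightarrow> wlen J al (wprod al ws) \<le> length ws"
  unfolding wlen_def by (rule Least_le) blast

lemma wlen_attained:
  "w \<in> weyl J al \<Longrightarrow> \<exists>ws. set ws \<subseteq> J \<and> length ws = wlen J al w \<and> wprod al ws = w"
  unfolding wlen_def weyl_def by (rule LeastI_ex) blast

section \<open>Positive roots\<close>

locale root_base =
  fixes R :: "'a::euclidean_space set" and I :: "'i set" and al :: "'i \<Rightarrow> 'a"
  assumes root_system: "root_system R" and base: "is_base R I al"
begin

abbreviation "pos \<equiv> pos_roots R I al"
abbreviation "s i \<equiv> refl (al i)"

lemma finite_R: "finite R"
  and zero_notin_R: "0 \<notin> R"
  and refl_in_R: "a \<in> R \<Longrightarrow> b \<in> R \<Longrightarrow> refl a b \<in> R"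
  and inner_coroot_Ints: "a \<in> R \<Longrightarrow> b \<in> R \<Longrightarrow> b \<bullet> coroot a \<in> \<int>"
  and multiple_in_R: "a \<in> R \<Longrightarrow> c *\<^sub>R a \<in> R \<Longrightarrow> c = 1 \<or> c = -1"
  using root_system by (simp_all add: root_system_def)

lemma finite_I: "finite I"
  and inj_on_al: "inj_on al I"
  and al_in_R: "i \<in> I \<Longrightarrow> al i \<in> R"
  and independent_al: "independent (al ` I)"
  and nonneg_comb_or_uminus: "b \<in> R \<Longrightarrow> nonneg_comb I al b \<or> nonneg_comb I al (- b)"
  using base by (auto simp: is_base_def)

lemma al_nonzero: "i \<in> I \<Longrightarrow> al i \<noteq> 0"
  using al_in_R zero_notin_R by metis

lemma uminus_in_R: "b \<in> R \<Longrightarrow> - b \<in> R"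
  using refl_in_R[of b b] zero_notin_R by (metis refl_self)

lemma base_coeff_zero:
  assumes "(\<Sum>i\<in>I. x i *\<^sub>R al i) = 0" "i \<in> I" shows "x i = 0"
proof -
  define u where "u v = x (inv_into I al v)" for v
  have "(\<Sum>v\<in>al ` I. u v *\<^sub>R v) = (\<Sum>i\<in>I. u (al i) *\<^sub>R al i)"
    by (rule sum.reindex[OF inj_on_al, unfolded comp_def])
  also have "\<dots> = 0"
    using assms(1) by (simp add: u_def inv_into_f_f[OF inj_on_al] cong: sum.cong)
  finally have "u (al i) = 0"
    using independentD[OF independent_al] finite_I assms(2) by blast
  then show ?thesis by (simp add: u_def inv_into_f_f[OF inj_on_al assms(2)])
qed

lemma base_coeff_eq:
  assumes "(\<Sum>i\<in>I. x i *\<^sub>R al i) = (\<Sum>i\<in>I. y i *\<^sub>R al i)" "i \<in> I" shows "x i = y i"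
proof -
  have "(\<Sum>i\<in>I. (x i - y i) *\<^sub>R al i) = 0"
    using assms(1) by (simp add: scaleR_diff_left sum_subtractf)
  then show ?thesis using base_coeff_zero[OF _ assms(2)] by fastforce
qed

lemma nonneg_comb_sum:
  assumes "finite K" "\<And>k. k \<in> K \<Longrightarrow> nonneg_comb I al (f k)" "\<And>k. k \<in> K \<Longrightarrow> c k \<ge> 0"
  shows "nonneg_comb I al (\<Sum>k\<in>K. of_int (c k) *\<^sub>R f k)"
  using assms
proof (induction K rule: finite_induct)
  case empty
  show ?case unfolding nonneg_comb_def by (intro exI[of _ "\<lambda>_. 0"]) simp
next
  case (insert k K)
  obtain a where a: "\<forall>i\<in>I. a i \<ge> 0" "f k = (\<Sum>i\<in>I. of_int (a i) *\<^sub>R al i)"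
    using insert.prems(1) by (auto simp: nonneg_comb_def)
  obtain b where b: "\<forall>i\<in>I. b i \<ge> 0" "(\<Sum>k\<in>K. of_int (c k) *\<^sub>R f k) = (\<Sum>i\<in>I. of_int (b i) *\<^sub>R al i)"
    using insert by (auto simp: nonneg_comb_def)
  have "(\<Sum>k\<in>insert k K. of_int (c k) *\<^sub>R f k) = (\<Sum>i\<in>I. of_int (c k * a i + b i) *\<^sub>R al i)"
    using insert.hyps by (simp add: a(2) b(2) scaleR_sum_right scaleR_add_left sum.distrib)
  then show ?case
    unfolding nonneg_comb_def using a(1) b(1) insert.prems(2) by (intro exI[of _ "\<lambda>i. c k * a i + b i"]) simp
qed

lemma nonneg_comb_al:
  assumes "i \<in> I" shows "nonneg_comb I al (al i)"
proof -
  have "(\<Sum>j\<in>I. of_int (if j = i then 1 else 0) *\<^sub>R al j) = (\<Sum>j\<in>I. if j = i then al j else 0)"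
    by (rule sum.cong) auto
  then show ?thesis
    unfolding nonneg_comb_def using assms finite_I by (intro exI[of _ "\<lambda>j. if j = i then 1 else 0"]) simp
qed

lemma nonneg_comb_antisym:
  assumes "nonneg_comb I al x" "nonneg_comb I al (- x)" shows "x = 0"
proof -
  obtain c where c: "\<forall>i\<in>I. c i \<ge> 0" "x = (\<Sum>i\<in>I. of_int (c i) *\<^sub>R al i)"
    using assms(1) by (auto simp: nonneg_comb_def)
  obtain d where d: "\<forall>i\<in>I. d i \<ge> 0" "- x = (\<Sum>i\<in>I. of_int (d i) *\<^sub>R al i)"
    using assms(2) by (auto simp: nonneg_comb_def)
  have "(\<Sum>i\<in>I. (of_int (c i + d i)::real) *\<^sub>R al i) = x + - x"
    by (simp add: c(2)[symmetric] d(2)[symmetric] scaleR_add_left sum.distrib)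
  then have "(of_int (c i + d i)::real) = 0" if "i \<in> I" for i
    using base_coeff_zero[OF _ that] by simp
  then have "\<forall>i\<in>I. c i = 0" using c(1) d(1) by fastforce
  then show ?thesis using c(2) by simp
qed

lemma pos_in_R: "a \<in> pos \<Longrightarrow> a \<in> R"
  and pos_nonneg_comb: "a \<in> pos \<Longrightarrow> nonneg_comb I al a"
  by (simp_all add: pos_roots_def)

lemma finite_pos: "finite pos"
  using finite_R by (simp add: pos_roots_def)

lemma al_in_pos: "i \<in> I \<Longrightarrow> al i \<in> pos"
  by (simp add: pos_roots_def al_in_R nonneg_comb_al)

lemma R_pos_or_neg: "b \<in> R \<Longrightarrow> b \<in> pos \<or> - b \<in> pos"
  using nonneg_comb_or_uminus uminus_in_R by (auto simp: pos_roots_def)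

lemma uminus_pos_notin: "a \<in> pos \<Longrightarrow> - a \<notin> pos"
  using nonneg_comb_antisym zero_notin_R by (auto simp: pos_roots_def)

text \<open>A positive root other than \<open>\<alpha>\<^sub>i\<close> has a positive coefficient at some \<open>\<alpha>\<^sub>j\<close>, \<open>j \<noteq> i\<close>
  (by reducedness), and \<open>s\<^sub>i\<close> does not change that coefficient.\<close>
lemma simple_refl_pos:
  assumes i: "i \<in> I" and a: "a \<in> pos" and ne: "a \<noteq> al i"
  shows "s i a \<in> pos"
proof -
  obtain c where c: "\<forall>j\<in>I. c j \<ge> 0" "a = (\<Sum>j\<in>I. of_int (c j) *\<^sub>R al j)"
    using a by (auto simp: pos_roots_def nonneg_comb_def)
  have aR: "a \<in> R" using a pos_in_R by blast
  obtain k where k: "a \<bullet> coroot (al i) = of_int k"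
    using inner_coroot_Ints[OF al_in_R[OF i] aR] Ints_cases by metis
  define c' where "c' j = c j - (if j = i then k else 0)" for j
  have "(\<Sum>j\<in>I. of_int (c' j) *\<^sub>R al j) = a - of_int k *\<^sub>R al i"
    using i finite_I
    by (simp add: c(2) c'_def scaleR_diff_left sum_subtractf if_distrib[of "\<lambda>r. of_int r *\<^sub>R _"]
        cong: if_cong)
  then have sa: "s i a = (\<Sum>j\<in>I. of_int (c' j) *\<^sub>R al j)"
    by (simp add: refl_def k)
  show ?thesis
  proof (cases "\<exists>j\<in>I. j \<noteq> i \<and> c j > 0")
    case True
    then obtain j where j: "j \<in> I" "j \<noteq> i" "c j > 0" by blast
    show ?thesis
    proof (rule ccontr)
      assume "s i a \<notin> pos"
      then have "- s i a \<in> pos" using R_pos_or_neg refl_in_R[OF al_in_R[OF i] aR] by blast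
      then obtain d where d: "\<forall>j\<in>I. d j \<ge> 0" "- s i a = (\<Sum>j\<in>I. of_int (d j) *\<^sub>R al j)"
        by (auto simp: pos_roots_def nonneg_comb_def)
      then have "(\<Sum>j\<in>I. (of_int (c' j)::real) *\<^sub>R al j) = (\<Sum>j\<in>I. (- of_int (d j)) *\<^sub>R al j)"
        by (simp add: sa[symmetric] sum_negf) (metis add.inverse_inverse)
      then have "(of_int (c' j)::real) = - of_int (d j)" by (rule base_coeff_eq[OF _ j(1)])
      then have "c' j = - d j" by linarith
      then show False using j d(1) by (force simp: c'_def)
    qed
  next
    case False
    then have "a = (\<Sum>j\<in>I. (if j = i then of_int (c i) *\<^sub>R al i else 0))"
      unfolding c(2) using c(1) by (intro sum.cong) force+
    then have ai: "a = of_int (c i) *\<^sub>R al i" using i finite_I by simp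
    then have "c i = 1" using multiple_in_R[OF al_in_R[OF i]] aR c(1) i by force
    then show ?thesis using ai ne by simp
  qed
qed

end

section \<open>Inversion sets and lengths\<close>

context root_base
begin

definition inversions :: "('a \<Rightarrow> 'a) \<Rightarrow> 'a set" where
  "inversions w = {a \<in> pos. - w a \<in> pos}"

lemma finite_inversions: "finite (inversions w)"
  using finite_pos by (simp add: inversions_def)

lemma inversions_id [simp]: "inversions id = {}"
  using uminus_pos_notin by (auto simp: inversions_def)

lemma wprod_in_R: "set ws \<subseteq> I \<Longrightarrow> a \<in> R \<Longrightarrow> wprod al ws a \<in> R"
  by (induction ws) (auto intro: refl_in_R al_in_R)

lemma weyl_in_R: "J \<subseteq> I \<Longrightarrow> w \<in> weyl J al \<Longrightarrow> a \<in> R \<Longrightarrow> w a \<in> R"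
  by (auto simp: weyl_def intro!: wprod_in_R)

lemma inversions_comp_simple:
  assumes w: "orthogonal_transformation w" and j: "j \<in> I" and p: "w (al j) \<in> pos"
  shows "inversions (w \<circ> s j) = insert (al j) (s j ` inversions w)"
    and "card (inversions (w \<circ> s j)) = Suc (card (inversions w))"
proof -
  show eq: "inversions (w \<circ> s j) = insert (al j) (s j ` inversions w)"
  proof (intro equalityI subsetI)
    fix b assume b: "b \<in> inversions (w \<circ> s j)"
    show "b \<in> insert (al j) (s j ` inversions w)"
    proof (cases "b = al j")
      case False
      then have "s j b \<in> inversions w" using simple_refl_pos[OF j] b by (auto simp: inversions_def)
      then show ?thesis by (metis insertI2 image_eqI refl_refl)
    qed simp
  next
    fix b assume b: "b \<in> insert (al j) (s j ` inversions w)"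
    show "b \<in> inversions (w \<circ> s j)"
    proof (cases "b = al j")
      case True
      then show ?thesis
        using al_in_pos[OF j] p al_nonzero[OF j] by (simp add: inversions_def orthogonal_transformation_minus[OF w])
    next
      case False
      then obtain a where a: "a \<in> inversions w" "b = s j a" using b by auto
      have "a \<noteq> al j" using a(1) p uminus_pos_notin by (auto simp: inversions_def)
      then show ?thesis using simple_refl_pos[OF j] a by (auto simp: inversions_def)
    qed
  qed
  have "al j \<notin> s j ` inversions w"
  proof
    assume "al j \<in> s j ` inversions w"
    then obtain a where "a \<in> inversions w" "al j = s j a" by auto
    then have "a = - al j" "a \<in> pos" using al_nonzero[OF j] by (auto simp: inversions_def) (metis refl_refl refl_self)
    then show False using uminus_pos_notin al_in_pos[OF j] by auto
  qed
  moreover have "inj_on (s j) (inversions w)" by (metis inj_onI refl_refl)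
  ultimately show "card (inversions (w \<circ> s j)) = Suc (card (inversions w))"
    unfolding eq using finite_inversions card_image by (simp add: card_insert_if)
qed

lemma card_inversions_comp_simple_neg:
  assumes w: "orthogonal_transformation w" and j: "j \<in> I" and n: "- w (al j) \<in> pos"
  shows "card (inversions w) = Suc (card (inversions (w \<circ> s j)))"
proof -
  have w': "orthogonal_transformation (w \<circ> s j)"
    using orthogonal_transformation_compose[OF w orthogonal_transformation_refl] .
  have "(w \<circ> s j) (al j) \<in> pos" using n al_nonzero[OF j] by (simp add: orthogonal_transformation_minus[OF w])
  from inversions_comp_simple(2)[OF w' j this] show ?thesis by (simp add: comp_def)
qed

lemma card_inversions_wprod_le: "set ws \<subseteq> I \<Longrightarrow> card (inversions (wprod al ws)) \<le> length ws"
proof (induction ws rule: rev_induct)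
  case (snoc j ws)
  then have j: "j \<in> I" and ws: "set ws \<subseteq> I" by auto
  let ?w = "wprod al ws"
  have w: "orthogonal_transformation ?w" by (rule orthogonal_transformation_wprod)
  consider "?w (al j) \<in> pos" | "- ?w (al j) \<in> pos"
    using R_pos_or_neg wprod_in_R[OF ws al_in_R[OF j]] by blast
  then show ?case
    by cases (use inversions_comp_simple(2)[OF w j] card_inversions_comp_simple_neg[OF w j]
        snoc.IH[OF ws] in \<open>simp_all add: wprod_snoc comp_def\<close>)
qed simp

lemma deletion_condition:
  assumes "set ws \<subseteq> I" "i \<in> I" "- wprod al ws (al i) \<in> pos"
  shows "\<exists>ws'. set ws' \<subseteq> set ws \<and> Suc (length ws') = length ws \<and> wprod al ws' = wprod al ws \<circ> s i"
  using assms
proof (induction ws)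
  case Nil then show ?case using al_in_pos uminus_pos_notin by fastforce
next
  case (Cons j ws)
  then have j: "j \<in> I" and ws: "set ws \<subseteq> I" by auto
  let ?g = "wprod al ws (al i)"
  show ?case
  proof (cases "- ?g \<in> pos")
    case True
    then obtain ws' where "set ws' \<subseteq> set ws" "Suc (length ws') = length ws"
      "wprod al ws' = wprod al ws \<circ> s i"
      using Cons.IH[OF ws Cons.prems(2)] by blast
    then show ?thesis by (intro exI[of _ "j # ws'"]) (auto simp: o_assoc)
  next
    case False
    then have "?g \<in> pos" using R_pos_or_neg wprod_in_R[OF ws al_in_R[OF Cons.prems(2)]] by blast
    moreover have "- s j ?g \<in> pos" using Cons.prems(3) by simp
    ultimately have "?g = al j" using simple_refl_pos[OF j] uminus_pos_notin by blast
    then have "wprod al ws \<circ> s i = s j \<circ> wprod al ws"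
      using orthogonal_transformation_comp_refl[OF orthogonal_transformation_wprod] by metis
    then have "wprod al (j # ws) \<circ> s i = wprod al ws"
      by (simp add: fun_eq_iff)
    then show ?thesis by (intro exI[of _ ws]) (auto simp del: wprod_Cons)
  qed
qed

lemma card_inversions_reduced:
  assumes J: "J \<subseteq> I" and ws: "set ws \<subseteq> J" "length ws = wlen J al (wprod al ws)"
  shows "card (inversions (wprod al ws)) = length ws"
  using ws
proof (induction ws rule: rev_induct)
  case (snoc j ws)
  then have jJ: "j \<in> J" and ws: "set ws \<subseteq> J" by auto
  then have j: "j \<in> I" and wsI: "set ws \<subseteq> I" using J by auto
  let ?w = "wprod al ws"
  have red: "length ws = wlen J al ?w"
  proof (rule ccontr)
    assume "length ws \<noteq> wlen J al ?w"
    then have lt: "wlen J al ?w < length ws" using wlen_le_length[of ws J al] ws by simp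
    obtain ws2 where ws2: "set ws2 \<subseteq> J" "length ws2 = wlen J al ?w" "wprod al ws2 = ?w"
      using wlen_attained[OF weyl_wprod[OF ws]] by blast
    have "wlen J al (wprod al (ws @ [j])) \<le> length (ws2 @ [j])"
      using wlen_le_length[of "ws2 @ [j]" J al] ws2 jJ by (simp add: wprod_snoc)
    then show False using snoc.prems(2) lt ws2(2) by simp
  qed
  have w: "orthogonal_transformation ?w" by (rule orthogonal_transformation_wprod)
  consider "?w (al j) \<in> pos" | "- ?w (al j) \<in> pos"
    using R_pos_or_neg wprod_in_R[OF wsI al_in_R[OF j]] by blast
  then show ?case
  proof cases
    case 1
    then show ?thesis
      using inversions_comp_simple(2)[OF w j 1] snoc.IH[OF ws red] by (simp add: wprod_snoc comp_def)
  next
    case 2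
    obtain ws' where "set ws' \<subseteq> set ws" "Suc (length ws') = length ws" "wprod al ws' = ?w \<circ> s j"
      using deletion_condition[OF wsI j 2] by blast
    then have "wlen J al (wprod al (ws @ [j])) < length (ws @ [j])"
      using wlen_le_length[of ws' J al] ws by (force simp: wprod_snoc)
    then show ?thesis using snoc.prems(2) by simp
  qed
qed simp

lemma wlen_eq_card_inversions: "J \<subseteq> I \<Longrightarrow> w \<in> weyl J al \<Longrightarrow> wlen J al w = card (inversions w)"
  using wlen_attained[of w J] card_inversions_reduced[of J] by metis

lemma inversions_empty_imp_id:
  assumes "w \<in> weyl I al" "inversions w = {}" shows "w = id"
proof -
  have "wlen I al w = 0" using wlen_eq_card_inversions[OF order_refl assms(1)] assms(2) by simp
  then show ?thesis using wlen_attained[OF assms(1)] by auto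
qed

end

section \<open>Parabolic subgroups and their longest elements\<close>

context root_base
begin

definition parabolic_pos :: "'i set \<Rightarrow> 'a set" where
  "parabolic_pos J = {a \<in> pos. a \<in> span (al ` J)}"

lemma finite_parabolic_pos: "finite (parabolic_pos J)"
  using finite_pos by (simp add: parabolic_pos_def)

lemma sum_al_in_span: "(\<Sum>i\<in>J. x i *\<^sub>R al i) \<in> span (al ` J)"
  by (intro span_sum span_scale span_base) auto

lemma parabolic_pos_I: "parabolic_pos I = pos"
  using sum_al_in_span by (auto simp: parabolic_pos_def pos_roots_def nonneg_comb_def)

lemma span_refl_iff: "j \<in> J \<Longrightarrow> s j x \<in> span (al ` J) \<longleftrightarrow> x \<in> span (al ` J)"
  unfolding refl_def by (metis diff_add_cancel imageI span_base span_diff span_add span_scale)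

lemma span_weyl_iff:
  assumes "w \<in> weyl J al" shows "w x \<in> span (al ` J) \<longleftrightarrow> x \<in> span (al ` J)"
proof -
  obtain ws where ws: "set ws \<subseteq> J" "w = wprod al ws" using assms by (auto simp: weyl_def)
  have "wprod al ws x \<in> span (al ` J) \<longleftrightarrow> x \<in> span (al ` J)" using ws(1)
    by (induction ws arbitrary: x) (auto simp: span_refl_iff)
  then show ?thesis using ws by simp
qed

lemma weyl_pos_outside_span:
  assumes J: "J \<subseteq> I" and w: "w \<in> weyl J al" and a: "a \<in> pos" "a \<notin> span (al ` J)"
  shows "w a \<in> pos"
proof -
  obtain ws where ws: "set ws \<subseteq> J" "w = wprod al ws" using w by (auto simp: weyl_def)
  have "wprod al ws a \<in> pos \<and> wprod al ws a \<notin> span (al ` J)" using ws(1)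
  proof (induction ws)
    case (Cons j ws)
    then have j: "j \<in> J" and IH: "wprod al ws a \<in> pos" "wprod al ws a \<notin> span (al ` J)" by auto
    have "wprod al ws a \<noteq> al j" using IH(2) j by (auto simp: span_base)
    then show ?case using simple_refl_pos[of j] j J IH span_refl_iff[OF j] by auto
  qed (use a in simp)
  then show ?thesis using ws by simp
qed

lemma parabolic_pos_nonneg_comb:
  assumes J: "J \<subseteq> I" and a: "a \<in> parabolic_pos J"
  obtains c where "\<forall>j\<in>J. c j \<ge> (0::int)" "a = (\<Sum>j\<in>J. of_int (c j) *\<^sub>R al j)"
proof -
  obtain c where c: "\<forall>i\<in>I. c i \<ge> 0" "a = (\<Sum>i\<in>I. of_int (c i) *\<^sub>R al i)"
    using a by (auto simp: parabolic_pos_def pos_roots_def nonneg_comb_def)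
  obtain u where "a = (\<Sum>v\<in>al ` J. u v *\<^sub>R v)"
    using a span_finite[of "al ` J"] finite_subset[OF J finite_I] by (auto simp: parabolic_pos_def)
  also have "\<dots> = (\<Sum>j\<in>J. u (al j) *\<^sub>R al j)"
    using inj_on_subset[OF inj_on_al J] by (rule sum.reindex[unfolded comp_def])
  also have "\<dots> = (\<Sum>i\<in>I. if i \<in> J then u (al i) *\<^sub>R al i else 0)"
    using J finite_I by (simp add: sum.If_cases Int_absorb1)
  also have "\<dots> = (\<Sum>i\<in>I. (if i \<in> J then u (al i) else 0) *\<^sub>R al i)"
    by (rule sum.cong) auto
  finally have "(\<Sum>i\<in>I. of_int (c i) *\<^sub>R al i) = (\<Sum>i\<in>I. (if i \<in> J then u (al i) else 0) *\<^sub>R al i)"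
    using c(2) by simp
  then have "\<forall>i\<in>I - J. c i = 0" using base_coeff_eq by fastforce
  then have "a = (\<Sum>j\<in>J. of_int (c j) *\<^sub>R al j)"
    unfolding c(2) using J finite_I by (intro sum.mono_neutral_right) auto
  then show thesis using that c(1) J by blast
qed

lemma linear_image_parabolic_pos:
  assumes J: "J \<subseteq> I" and f: "linear f" and a: "a \<in> parabolic_pos J"
    and fJ: "\<forall>j\<in>J. f (al j) \<in> pos" and fa: "f a \<in> R"
  shows "f a \<in> pos"
proof -
  obtain c where c: "\<forall>j\<in>J. c j \<ge> (0::int)" "a = (\<Sum>j\<in>J. of_int (c j) *\<^sub>R al j)"
    using parabolic_pos_nonneg_comb[OF J a] by blast
  have "f a = (\<Sum>j\<in>J. of_int (c j) *\<^sub>R f (al j))"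
    unfolding c(2) by (simp add: linear_sum[OF f] linear_scale[OF f])
  then have "nonneg_comb I al (f a)"
    using nonneg_comb_sum[of J "\<lambda>j. f (al j)" c] fJ pos_nonneg_comb c(1) finite_subset[OF J finite_I]
    by simp
  then show ?thesis using fa by (simp add: pos_roots_def)
qed

lemma weyl_parabolic_pos:
  assumes J: "J \<subseteq> I" and w: "w \<in> weyl I al" and a: "a \<in> parabolic_pos J"
  shows "\<forall>j\<in>J. w (al j) \<in> pos \<Longrightarrow> w a \<in> pos"
    and "\<forall>j\<in>J. - w (al j) \<in> pos \<Longrightarrow> - w a \<in> pos"
proof -
  have lin: "linear w" "linear (\<lambda>x. - w x)"
    using orthogonal_transformation_weyl[OF w] orthogonal_transformation_neg orthogonal_transformation_linear
    by blast+
  have "w a \<in> R" using weyl_in_R[OF order_refl w] a by (simp add: parabolic_pos_def pos_in_R)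
  then show "\<forall>j\<in>J. w (al j) \<in> pos \<Longrightarrow> w a \<in> pos"
    and "\<forall>j\<in>J. - w (al j) \<in> pos \<Longrightarrow> - w a \<in> pos"
    using linear_image_parabolic_pos[OF J lin(1) a] linear_image_parabolic_pos[OF J lin(2) a] uminus_in_R
    by auto
qed

definition negates_simples :: "'i set \<Rightarrow> ('a \<Rightarrow> 'a) \<Rightarrow> bool" where
  "negates_simples J w \<longleftrightarrow> w \<in> weyl J al \<and> (\<forall>j\<in>J. - w (al j) \<in> pos)"

lemma inversions_negates_simples:
  assumes J: "J \<subseteq> I" and w: "negates_simples J w" shows "inversions w = parabolic_pos J"
proof
  have wJ: "w \<in> weyl J al" and wI: "w \<in> weyl I al"
    using w weyl_mono[OF J] by (auto simp: negates_simples_def)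
  show "parabolic_pos J \<subseteq> inversions w"
  proof
    fix a assume "a \<in> parabolic_pos J"
    then show "a \<in> inversions w"
      using weyl_parabolic_pos(2)[OF J wI] w by (auto simp: negates_simples_def inversions_def parabolic_pos_def)
  qed
  show "inversions w \<subseteq> parabolic_pos J"
  proof
    fix a assume a: "a \<in> inversions w"
    then have "w a \<notin> pos" using uminus_pos_notin by (auto simp: inversions_def)
    then show "a \<in> parabolic_pos J"
      using weyl_pos_outside_span[OF J wJ] a by (auto simp: inversions_def parabolic_pos_def)
  qed
qed

text \<open>\<open>w\<close> maps \<open>parabolic_pos J\<close> injectively into its negative, hence onto it by counting.\<close>
lemma negates_simples_onto:
  assumes J: "J \<subseteq> I" and w: "negates_simples J w" and b: "b \<in> parabolic_pos J"
  obtains d where "d \<in> parabolic_pos J" "w d = - b"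
proof -
  have wJ: "w \<in> weyl J al" and wI: "w \<in> weyl I al" using w J weyl_mono by (auto simp: negates_simples_def)
  have sub: "w ` parabolic_pos J \<subseteq> uminus ` parabolic_pos J"
  proof
    fix x assume "x \<in> w ` parabolic_pos J"
    then obtain d where d: "d \<in> parabolic_pos J" "x = w d" by auto
    have "- w d \<in> pos" using weyl_parabolic_pos(2)[OF J wI d(1)] w by (auto simp: negates_simples_def)
    moreover have "- w d \<in> span (al ` J)"
      using d(1) span_weyl_iff[OF wJ] span_neg by (fastforce simp: parabolic_pos_def)
    ultimately show "x \<in> uminus ` parabolic_pos J"
      using d(2) by (auto simp: parabolic_pos_def intro!: image_eqI[of _ _ "- w d"])
  qed
  have "inj_on w (parabolic_pos J)"
    using orthogonal_transformation_inj[OF orthogonal_transformation_weyl[OF wJ]] by (rule inj_on_subset) simp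
  then have "card (w ` parabolic_pos J) = card (uminus ` parabolic_pos J)"
    by (simp add: card_image inj_on_def)
  then have "w ` parabolic_pos J = uminus ` parabolic_pos J"
    using card_seteq[OF _ sub] finite_parabolic_pos by simp
  then show thesis using b that by (metis (no_types, lifting) image_iff imageI)
qed

lemma negates_simples_unique:
  assumes J: "J \<subseteq> I" and w: "negates_simples J w" and w': "negates_simples J w'" shows "w = w'"
proof -
  have wJ: "w \<in> weyl J al" and w'J: "w' \<in> weyl J al" using w w' by (auto simp: negates_simples_def)
  obtain v where v: "v \<in> weyl J al" "\<And>x. v (w x) = x" "\<And>x. w (v x) = x" using weyl_inverse[OF wJ] by blast
  have "inversions (v \<circ> w') = {}"
  proof (rule ccontr)
    assume "inversions (v \<circ> w') \<noteq> {}"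
    then obtain a where a: "a \<in> pos" "- v (w' a) \<in> pos" by (auto simp: inversions_def)
    have "v (w' a) \<in> pos"
    proof (cases "a \<in> span (al ` J)")
      case True
      then have "- w' a \<in> parabolic_pos J"
        using inversions_negates_simples[OF J w'] span_weyl_iff[OF w'J] span_neg a(1)
        by (force simp: inversions_def parabolic_pos_def)
      then obtain d where "d \<in> parabolic_pos J" "w d = w' a"
        using negates_simples_onto[OF J w] by (metis minus_minus)
      then show ?thesis using v(2) by (metis parabolic_pos_def mem_Collect_eq)
    next
      case False
      then show ?thesis using weyl_pos_outside_span[OF J] span_weyl_iff[OF w'J] v(1) w'J a(1) by blast
    qed
    then show False using a(2) uminus_pos_notin by blast
  qed
  then have "v \<circ> w' = id"
    using inversions_empty_imp_id weyl_mono[OF J weyl_comp[OF v(1) w'J]] by blast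
  then show "w = w'" by (metis comp_apply id_apply v(3) ext)
qed

lemma length_maximal_negates_simples:
  assumes J: "J \<subseteq> I" and w: "w \<in> weyl J al" and max: "\<forall>x\<in>weyl J al. wlen J al x \<le> wlen J al w"
  shows "negates_simples J w"
  unfolding negates_simples_def
proof (intro conjI ballI w)
  fix j assume j: "j \<in> J"
  show "- w (al j) \<in> pos"
  proof (rule ccontr)
    assume "- w (al j) \<notin> pos"
    then have "w (al j) \<in> pos" using R_pos_or_neg weyl_in_R[OF J w al_in_R] j J by blast
    then have "card (inversions (w \<circ> s j)) = Suc (card (inversions w))"
      using inversions_comp_simple(2)[OF orthogonal_transformation_weyl[OF w]] j J by auto
    then have "wlen J al (w \<circ> s j) = Suc (wlen J al w)"
      using wlen_eq_card_inversions[OF J] w weyl_comp_refl[OF j w] by simp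
    then show False using max weyl_comp_refl[OF j w] by fastforce
  qed
qed

lemma longest_negates_simples:
  assumes J: "J \<subseteq> I" shows "negates_simples J (longest J al)"
proof -
  have "wlen J al ` weyl J al \<subseteq> {..card pos}"
    using wlen_eq_card_inversions[OF J] card_mono[OF finite_pos] by (fastforce simp: inversions_def)
  then have fin: "finite (wlen J al ` weyl J al)" using finite_subset by blast
  have "id \<in> weyl J al" using weyl_wprod[of "[]" J al] by simp
  then obtain w where w: "w \<in> weyl J al" "wlen J al w = Max (wlen J al ` weyl J al)"
    using Max_in[OF fin] by (metis empty_iff image_empty image_iff)
  then have max: "\<forall>x\<in>weyl J al. wlen J al x \<le> wlen J al w" using Max_ge[OF fin] by simp
  have "longest J al = w" unfolding longest_def
  proof (rule the_equality)
    fix w' assume "w' \<in> weyl J al \<and> (\<forall>x\<in>weyl J al. wlen J al x \<le> wlen J al w')"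
    then show "w' = w"
      using negates_simples_unique[OF J] length_maximal_negates_simples[OF J] w(1) max by blast
  qed (use w(1) max in blast)
  then show ?thesis using length_maximal_negates_simples[OF J w(1) max] by simp
qed

text \<open>The inverse of an element negating the simple roots of \<open>J\<close> negates them as well, so it
  is the same element by uniqueness.\<close>
lemma negates_simples_involutive:
  assumes J: "J \<subseteq> I" and w: "negates_simples J w" shows "w (w x) = x"
proof -
  have wJ: "w \<in> weyl J al" using w by (simp add: negates_simples_def)
  obtain v where v: "v \<in> weyl J al" "\<And>x. v (w x) = x" "\<And>x. w (v x) = x" using weyl_inverse[OF wJ] by blast
  have "- v (al j) \<in> pos" if j: "j \<in> J" for j
  proof -
    have "al j \<in> parabolic_pos J" using j J al_in_pos by (auto simp: parabolic_pos_def span_base)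
    then obtain d where "d \<in> parabolic_pos J" "w d = - al j" using negates_simples_onto[OF J w] by blast
    then show ?thesis
      using v(2) orthogonal_transformation_minus[OF orthogonal_transformation_weyl[OF v(1)]]
      by (metis minus_minus parabolic_pos_def mem_Collect_eq)
  qed
  then have "v = w" using negates_simples_unique[OF J _ w] v(1) by (simp add: negates_simples_def)
  then show ?thesis using v(3) by simp
qed

abbreviation "w0 \<equiv> longest I al"

lemma w0_negates_simples: "negates_simples I w0"
  using longest_negates_simples by simp

lemma w0_in_weyl: "w0 \<in> weyl I al"
  using w0_negates_simples by (simp add: negates_simples_def)

lemma orthogonal_transformation_w0: "orthogonal_transformation w0"
  using orthogonal_transformation_weyl[OF w0_in_weyl] .

lemma inversions_w0: "inversions w0 = pos"
  using inversions_negates_simples[OF order_refl w0_negates_simples] parabolic_pos_I by simp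

lemma w0_pos: "a \<in> pos \<Longrightarrow> - w0 a \<in> pos"
  using inversions_w0 by (auto simp: inversions_def)

lemma w0_w0 [simp]: "w0 (w0 x) = x"
  using negates_simples_involutive[OF order_refl w0_negates_simples] .

end

section \<open>The minimal representative \<open>v(\<lambda>\<^sub>-)\<close>\<close>

locale dominant_weight = root_base +
  fixes lam :: 'a
  assumes dominant: "lam \<in> dominant I al"
begin

abbreviation "S \<equiv> stab_set I al lam"
abbreviation "w0S \<equiv> longest S al"
abbreviation "lam_minus \<equiv> w0 lam"
abbreviation "v0 \<equiv> min_rep I al lam lam_minus"

lemma stab_subset: "S \<subseteq> I"
  by (auto simp: stab_set_def)

lemma inner_al_nonneg: "i \<in> I \<Longrightarrow> lam \<bullet> al i \<ge> 0"
  using dominant inner_coroot_pos_iff[of lam "al i"] inner_coroot_eq_0_iff[of lam "al i"]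
  by (force simp: dominant_def)

lemma inner_al_pos: "i \<in> I \<Longrightarrow> i \<notin> S \<Longrightarrow> lam \<bullet> al i > 0"
  using inner_al_nonneg[of i] inner_coroot_eq_0_iff[of lam "al i"] by (simp add: stab_set_def)

lemma inner_span_stab:
  assumes "a \<in> span (al ` S)" shows "lam \<bullet> a = 0"
proof -
  have "orthogonal lam y" if "y \<in> al ` S" for y
    using that inner_coroot_eq_0_iff[of lam] by (auto simp: orthogonal_def stab_set_def)
  then show ?thesis using orthogonal_to_span[OF assms] by (simp add: orthogonal_def)
qed

lemma inner_pos_outside_span:
  assumes a: "a \<in> pos" "a \<notin> span (al ` S)" shows "lam \<bullet> a > 0"
proof -
  obtain c where c: "\<forall>i\<in>I. c i \<ge> 0" "a = (\<Sum>i\<in>I. of_int (c i) *\<^sub>R al i)"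
    using a by (auto simp: pos_roots_def nonneg_comb_def)
  have "\<exists>i\<in>I - S. c i \<noteq> 0"
  proof (rule ccontr)
    assume "\<not> ?thesis"
    then have "a = (\<Sum>i\<in>S. of_int (c i) *\<^sub>R al i)"
      unfolding c(2) using stab_subset finite_I by (intro sum.mono_neutral_right) auto
    then show False using a(2) sum_al_in_span by simp
  qed
  then obtain i where i: "i \<in> I" "i \<notin> S" "c i > 0" using c(1) by force
  have "lam \<bullet> a = (\<Sum>i\<in>I. of_int (c i) * (lam \<bullet> al i))" by (simp add: c(2) inner_sum_right)
  also have "\<dots> > 0"
    using i inner_al_pos[OF i(1,2)] c(1) inner_al_nonneg finite_I by (intro sum_pos2[where i=i]) auto
  finally show ?thesis .
qed

lemma refl_stab: "j \<in> S \<Longrightarrow> s j lam = lam"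
  by (simp add: refl_def stab_set_def)

lemma inner_lam_minus_pos: "c \<in> pos \<Longrightarrow> lam_minus \<bullet> c \<le> 0"
proof -
  assume c: "c \<in> pos"
  have "lam_minus \<bullet> c = - (lam \<bullet> (- w0 c))"
    using orthogonal_transformation_inner[OF orthogonal_transformation_w0, of lam "w0 c"] by simp
  also have "\<dots> \<le> 0"
    using inner_span_stab[of "- w0 c"] inner_pos_outside_span[OF w0_pos[OF c]]
    by (cases "- w0 c \<in> span (al ` S)") auto
  finally show ?thesis .
qed

lemma inner_lam_minus_coroot: "lam_minus \<bullet> coroot a = lam \<bullet> coroot (w0 a)"
  using orthogonal_transformation_inner[OF orthogonal_transformation_w0, of lam "w0 (coroot a)"]
  by (simp add: orthogonal_transformation_coroot[OF orthogonal_transformation_w0])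

lemma w0S_negates_simples: "negates_simples S w0S"
  using longest_negates_simples[OF stab_subset] .

lemma w0S_in_weyl: "w0S \<in> weyl S al"
  using w0S_negates_simples by (simp add: negates_simples_def)

lemma length_minimal_rep_pos:
  assumes x: "x \<in> weyl I al" "x lam = lam_minus"
    and min: "\<forall>y\<in>weyl I al. y lam = lam_minus \<longrightarrow> wlen I al x \<le> wlen I al y"
    and j: "j \<in> S"
  shows "x (al j) \<in> pos"
proof (rule ccontr)
  have jI: "j \<in> I" using j stab_subset by blast
  assume "x (al j) \<notin> pos"
  then have "- x (al j) \<in> pos" using R_pos_or_neg weyl_in_R[OF order_refl x(1) al_in_R[OF jI]] by blast
  then have "card (inversions x) = Suc (card (inversions (x \<circ> s j)))"
    using card_inversions_comp_simple_neg[OF orthogonal_transformation_weyl[OF x(1)] jI] by blast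
  moreover have "wlen I al x \<le> wlen I al (x \<circ> s j)"
    using min weyl_comp_refl[OF jI x(1)] refl_stab[OF j] x(2) by simp
  ultimately show False
    using wlen_eq_card_inversions[OF order_refl] x(1) weyl_comp_refl[OF jI x(1)] by simp
qed

text \<open>\<open>\<langle>\<lambda>\<^sub>-, x b\<rangle> = \<langle>\<lambda>, b\<rangle> > 0\<close>, whereas the antidominant \<open>\<lambda>\<^sub>-\<close> pairs nonpositively with
  every positive root.\<close>
lemma rep_negates_outside_span:
  assumes x: "x \<in> weyl I al" "x lam = lam_minus" and b: "b \<in> pos" "b \<notin> span (al ` S)"
  shows "- x b \<in> pos"
proof (rule ccontr)
  assume "- x b \<notin> pos"
  then have "x b \<in> pos" using R_pos_or_neg weyl_in_R[OF order_refl x(1)] b(1) pos_in_R by blast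
  moreover have "lam_minus \<bullet> x b = lam \<bullet> b"
    using x orthogonal_transformation_inner[OF orthogonal_transformation_weyl[OF x(1)]] by metis
  ultimately show False using inner_pos_outside_span[OF b] inner_lam_minus_pos by fastforce
qed

lemma rep_comp_w0S:
  assumes x: "x \<in> weyl I al" "x lam = lam_minus" and pos: "\<forall>j\<in>S. x (al j) \<in> pos"
  shows "x \<circ> w0S = w0"
proof -
  have "negates_simples I (x \<circ> w0S)"
    unfolding negates_simples_def
  proof (intro conjI ballI)
    show "x \<circ> w0S \<in> weyl I al" using weyl_comp[OF x(1) weyl_mono[OF stab_subset w0S_in_weyl]] .
  next
    fix j assume j: "j \<in> I"
    show "- (x \<circ> w0S) (al j) \<in> pos"
    proof (cases "j \<in> S")
      case True
      have "al j \<in> inversions w0S"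
        using True al_in_pos[OF j] inversions_negates_simples[OF stab_subset w0S_negates_simples]
        by (auto simp: parabolic_pos_def span_base)
      moreover have "- w0S (al j) \<in> span (al ` S)"
        using span_weyl_iff[OF w0S_in_weyl] True span_neg span_base by (metis imageI)
      ultimately have "- w0S (al j) \<in> parabolic_pos S" by (simp add: inversions_def parabolic_pos_def)
      then have "x (- w0S (al j)) \<in> pos" using weyl_parabolic_pos(1)[OF stab_subset x(1)] pos by blast
      then show ?thesis using orthogonal_transformation_minus[OF orthogonal_transformation_weyl[OF x(1)]] by simp
    next
      case False
      have nsp: "al j \<notin> span (al ` S)" using inner_span_stab inner_al_pos[OF j False] by force
      then have "w0S (al j) \<in> pos" "w0S (al j) \<notin> span (al ` S)"
        using weyl_pos_outside_span[OF stab_subset w0S_in_weyl al_in_pos[OF j]] span_weyl_iff[OF w0S_in_weyl]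
        by auto
      then show ?thesis using rep_negates_outside_span[OF x] by simp
    qed
  qed
  then show ?thesis using negates_simples_unique[OF order_refl _ w0_negates_simples] by blast
qed

text \<open>Every length-minimal \<open>x\<close> with \<open>x \<lambda> = \<lambda>\<^sub>-\<close> satisfies \<open>x \<circ> w0S = w0\<close>; as \<open>w0S\<close> is an
  involution this pins \<open>x\<close> down, so the definite description in \<open>min_rep\<close> is well defined.\<close>
lemma min_rep_props:
  "v0 \<in> weyl I al" "v0 lam = lam_minus" "\<forall>j\<in>S. v0 (al j) \<in> pos" "v0 \<circ> w0S = w0"
proof -
  let ?C = "\<lambda>x. x \<in> weyl I al \<and> x lam = lam_minus"
  let ?Q = "\<lambda>x. x \<in> weyl I al \<and> x lam = lam_minus \<and>
    (\<forall>y\<in>weyl I al. y lam = lam_minus \<longrightarrow> wlen I al x \<le> wlen I al y)"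
  have Q_props: "(\<forall>j\<in>S. x (al j) \<in> pos) \<and> x \<circ> w0S = w0" if "?Q x" for x
    using length_minimal_rep_pos rep_comp_w0S that by blast
  have "?C w0" using w0_in_weyl by blast
  then obtain x where x: "?C x" "\<And>y. ?C y \<Longrightarrow> wlen I al x \<le> wlen I al y"
    using ex_has_least_nat[of ?C w0 "wlen I al"] by blast
  have Qx: "?Q x" using x by blast
  have "v0 = x" unfolding min_rep_def
  proof (rule the_equality)
    show "?Q x" by (rule Qx)
  next
    fix y assume "?Q y"
    then have "y \<circ> w0S = x \<circ> w0S" using Q_props[of y] Q_props[OF Qx] by simp
    then show "y = x"
      using negates_simples_involutive[OF stab_subset w0S_negates_simples]
      by (metis comp_apply ext)
  qed
  then show "v0 \<in> weyl I al" "v0 lam = lam_minus" "\<forall>j\<in>S. v0 (al j) \<in> pos" "v0 \<circ> w0S = w0"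
    using Qx Q_props[OF Qx] by simp_all
qed

lemma inversions_min_rep: "inversions v0 = pos - parabolic_pos S"
proof (intro equalityI subsetI)
  fix a assume "a \<in> inversions v0"
  then show "a \<in> pos - parabolic_pos S"
    using weyl_parabolic_pos(1)[OF stab_subset min_rep_props(1) _ min_rep_props(3)] uminus_pos_notin
    by (auto simp: inversions_def)
next
  fix a assume "a \<in> pos - parabolic_pos S"
  then show "a \<in> inversions v0"
    using rep_negates_outside_span[OF min_rep_props(1,2)] by (auto simp: inversions_def parabolic_pos_def)
qed

end

section \<open>The roots \<open>\<beta>\<^sub>k\<close> of a reduced word\<close>

lemma beta_root_snoc:
  "k \<in> {1..length ws} \<Longrightarrow> beta_root al (ws @ [j]) k = refl (al j) (beta_root al ws k)"
  by (auto simp: beta_root_def nth_append)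

lemma beta_root_last: "beta_root al (ws @ [j]) (Suc (length ws)) = al j"
  by (simp add: beta_root_def)

lemma beta_root_drop:
  "k \<in> {Suc M..length ws} \<Longrightarrow> beta_root al ws k = beta_root al (drop M ws) (k - M)"
  by (simp add: beta_root_def)

context root_base
begin

text \<open>The hypothesis on the cardinality says that \<open>ws\<close> is a reduced word.\<close>
lemma beta_root_image:
  "set ws \<subseteq> I \<Longrightarrow> card (inversions (wprod al ws)) = length ws \<Longrightarrow>
   beta_root al ws ` {1..length ws} = inversions (wprod al ws)"
proof (induction ws rule: rev_induct)
  case (snoc j ws)
  then have j: "j \<in> I" and ws: "set ws \<subseteq> I" by auto
  let ?w = "wprod al ws"
  have w: "orthogonal_transformation ?w" by (rule orthogonal_transformation_wprod)
  have "- ?w (al j) \<notin> pos"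
  proof
    assume "- ?w (al j) \<in> pos"
    from card_inversions_comp_simple_neg[OF w j this]
    have "card (inversions ?w) = Suc (card (inversions (wprod al (ws @ [j]))))"
      by (simp add: wprod_snoc)
    then show False using snoc.prems(2) card_inversions_wprod_le[OF ws] by simp
  qed
  then have p: "?w (al j) \<in> pos" using R_pos_or_neg wprod_in_R[OF ws al_in_R[OF j]] by blast
  have "card (inversions ?w) = length ws"
    using inversions_comp_simple(2)[OF w j p] snoc.prems(2) by (simp add: wprod_snoc comp_def)
  then have IH: "beta_root al ws ` {1..length ws} = inversions ?w" using snoc.IH[OF ws] by blast
  have "{1..length (ws @ [j])} = insert (Suc (length ws)) {1..length ws}" by auto
  moreover have "beta_root al (ws @ [j]) ` {1..length ws} = s j ` beta_root al ws ` {1..length ws}"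
    unfolding image_image by (intro image_cong refl beta_root_snoc)
  ultimately show ?case
    using inversions_comp_simple(1)[OF w j p] IH by (simp add: wprod_snoc beta_root_last comp_def)
qed simp

lemma inj_on_beta_root:
  assumes "set ws \<subseteq> I" "card (inversions (wprod al ws)) = length ws"
  shows "inj_on (beta_root al ws) {1..length ws}"
  using beta_root_image[OF assms] assms(2) by (intro eq_card_imp_inj_on) simp_all

end

locale reduced_words = dominant_weight +
  fixes "is" and M :: nat
  assumes M_le: "M \<le> length is"
    and reduced_v0: "reduced_expr I al (take M is) v0"
    and reduced_w0S: "reduced_expr I al (drop M is) w0S"
begin

abbreviation "N \<equiv> length is"
abbreviation "\<beta> \<equiv> beta_root al is"

lemma card_inversions_reduced_expr:
  "reduced_expr J al ws w \<Longrightarrow> J \<subseteq> I \<Longrightarrow> card (inversions w) = length ws"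
  unfolding reduced_expr_def using card_inversions_reduced by blast

lemma set_take: "set (take M is) \<subseteq> I"
  and wprod_take: "wprod al (take M is) = v0"
  and card_take: "M = card (pos - parabolic_pos S)"
  using reduced_v0 card_inversions_reduced_expr[OF reduced_v0 order_refl] M_le
  by (auto simp: reduced_expr_def inversions_min_rep min_def split: if_splits)

lemma set_drop: "set (drop M is) \<subseteq> I"
  and wprod_drop: "wprod al (drop M is) = w0S"
  and card_drop: "card (inversions w0S) = length (drop M is)"
  using reduced_w0S card_inversions_reduced_expr[OF reduced_w0S order_refl]
  by (auto simp: reduced_expr_def)

lemma set_is: "set is \<subseteq> I"
  using set_take set_drop set_append append_take_drop_id by (metis Un_subset_iff)

lemma wprod_is: "wprod al is = w0"
  using min_rep_props(4) wprod_take wprod_drop wprod_append append_take_drop_id by metis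

lemma length_is: "N = card pos"
proof -
  have sub: "parabolic_pos S \<subseteq> pos" by (auto simp: parabolic_pos_def)
  have "N = card (pos - parabolic_pos S) + card (parabolic_pos S)"
    using card_take card_drop M_le inversions_negates_simples[OF stab_subset w0S_negates_simples] by simp
  also have "\<dots> = card pos"
    using card_Diff_subset[OF finite_parabolic_pos sub] card_mono[OF finite_pos sub] by simp
  finally show ?thesis .
qed

lemma beta_image: "\<beta> ` {1..N} = pos"
  and inj_on_beta: "inj_on \<beta> {1..N}"
  using beta_root_image[OF set_is] inj_on_beta_root[OF set_is] wprod_is inversions_w0 length_is by simp_all

lemma beta_inject: "j \<in> {1..N} \<Longrightarrow> k \<in> {1..N} \<Longrightarrow> \<beta> j = \<beta> k \<Longrightarrow> j = k"
  using inj_on_beta by (auto dest: inj_onD)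

lemma beta_image_high: "\<beta> ` {Suc M..N} = parabolic_pos S"
proof -
  have "\<beta> ` {Suc M..N} = beta_root al (drop M is) ` ((\<lambda>k. k - M) ` {Suc M..N})"
    unfolding image_image by (intro image_cong refl beta_root_drop)
  also have "(\<lambda>k. k - M) ` {Suc M..N} = {1..length (drop M is)}"
    by (auto simp: image_iff intro!: bexI[of _ "_ + M"])
  also have "beta_root al (drop M is) ` {1..length (drop M is)} = inversions w0S"
    using beta_root_image[OF set_drop] card_drop wprod_drop by simp
  finally show ?thesis
    using inversions_negates_simples[OF stab_subset w0S_negates_simples] by simp
qed

lemma beta_image_low: "\<beta> ` {1..M} = pos - parabolic_pos S"
proof -
  have "{1..N} = {1..M} \<union> {Suc M..N}" using M_le by auto
  then have "\<beta> ` {1..M} \<union> \<beta> ` {Suc M..N} = pos" and "\<beta> ` {1..M} \<inter> \<beta> ` {Suc M..N} = {}"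
    using beta_image inj_on_image_Int[OF inj_on_beta, of "{1..M}" "{Suc M..N}"] by auto
  then show ?thesis using beta_image_high by blast
qed

end

section \<open>Combinatorics of sorted enumerations\<close>

lemma sorted_wrt_map_upt_less:
  assumes "sorted_wrt Q (map T [1..<L + 1])" "1 \<le> i" "i < j" "j \<le> L"
  shows "Q (T i) (T j)"
proof -
  have "\<forall>i j. i < j \<longrightarrow> j < L \<longrightarrow> Q (T (Suc i)) (T (Suc j))"
    using assms(1) unfolding sorted_wrt_iff_nth_less by (simp del: upt_Suc)
  then have "Q (T (Suc (i - 1))) (T (Suc (j - 1)))"
    by (elim allE[of _ "i - 1"] allE[of _ "j - 1"]) (use assms(2-4) in auto)
  then show ?thesis using assms(2-4) by simp
qed

lemma strict_mono_on_self_eq: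
  fixes f :: "nat \<Rightarrow> nat"
  assumes mono: "strict_mono_on {1..M} f" and into: "f ` {1..M} \<subseteq> {1..M}" and k: "k \<in> {1..M}"
  shows "f k = k"
proof -
  have "f ` {1..M} = {1..M}"
    using card_subset_eq[OF _ into] card_image[OF strict_mono_on_imp_inj_on[OF mono]] by simp
  moreover have "sorted_wrt (<) (map f [1..<M+1])"
    by (rule sorted_wrt_map_mono[OF sorted_wrt_upt]) (use mono in \<open>auto simp: strict_mono_on_def\<close>)
  ultimately have "map f [1..<M+1] = [1..<M+1]"
    by (intro sorted_distinct_set_unique)
      (auto simp del: upt_Suc simp: strict_sorted_iff atLeastLessThanSuc_atLeastAtMost)
  then have "map f [1..<M+1] ! (k - 1) = [1..<M+1] ! (k - 1)" by simp
  then show ?thesis using k by (auto simp del: upt_Suc)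
qed

lemma zeros_initial_segment:
  fixes h :: "nat \<Rightarrow> 'b::{order, zero}"
  assumes mono: "\<And>i j. 1 \<le> i \<Longrightarrow> i < j \<Longrightarrow> j \<le> L \<Longrightarrow> h i \<le> h j"
    and nonneg: "\<And>k. k \<in> {1..L} \<Longrightarrow> h k \<ge> 0"
    and card: "card {k \<in> {1..L}. h k = 0} = M" and k: "k \<in> {1..M}"
  shows "h k = 0"
proof (rule ccontr)
  let ?K = "{k \<in> {1..L}. h k = 0}"
  assume hk: "h k \<noteq> 0"
  have "?K \<subseteq> {1..L}" by blast
  then have "M \<le> L" using card card_mono[of "{1..L}" ?K] by simp
  have "p < k" if p: "p \<in> ?K" for p
  proof (rule ccontr)
    assume "\<not> p < k"
    then have "k < p" using p hk by (cases "p = k") auto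
    then have "h k \<le> 0" using mono[of k p] k p by auto
    moreover have "h k \<ge> 0" using nonneg[of k] k \<open>M \<le> L\<close> by simp
    ultimately show False using hk by simp
  qed
  then have "?K \<subseteq> {1..<k}" by auto
  then have "M \<le> k - 1" using card card_mono[of "{1..<k}" ?K] by simp
  then show False using k by auto
qed

section \<open>Inversions of \<open>t(\<lambda>\<^sub>-)\<close> at level zero\<close>

context root_base
begin

lemma wprod_weights: "set ws \<subseteq> I \<Longrightarrow> x \<in> weights I al \<Longrightarrow> wprod al ws x \<in> weights I al"
proof (induction ws)
  case (Cons j ws)
  then have j: "j \<in> I" and y: "wprod al ws x \<in> weights I al" by auto
  let ?y = "wprod al ws x"
  have "s j ?y \<bullet> coroot (al i) = ?y \<bullet> coroot (al i) - (?y \<bullet> coroot (al j)) * (al j \<bullet> coroot (al i))" for i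
    by (simp add: refl_def inner_diff_left)
  then show ?case
    using y j inner_coroot_Ints al_in_R by (simp add: weights_def)
qed simp

end

context reduced_words
begin

lemma inner_coroot_pos_Ints:
  assumes a: "a \<in> pos" shows "lam \<bullet> coroot a \<in> \<int>"
proof -
  obtain k where k: "k \<in> {1..N}" "a = \<beta> k" using beta_image a by blast
  let ?d = "drop k is" and ?i = "is ! (k - 1)"
  have i: "?i \<in> I" using set_is k(1) by (auto simp: subset_iff)
  have d: "set ?d \<subseteq> I" using set_is by (auto dest: in_set_dropD)
  have "lam \<bullet> coroot a = wprod al (rev ?d) (wprod al ?d lam) \<bullet> wprod al (rev ?d) (coroot (al ?i))"
    using k(2) by (simp add: beta_root_def orthogonal_transformation_coroot[OF orthogonal_transformation_wprod])
  also have "\<dots> = wprod al ?d lam \<bullet> coroot (al ?i)"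
    by (rule orthogonal_transformation_inner[OF orthogonal_transformation_wprod])
  finally show ?thesis
    using wprod_weights[OF d] dominant i by (auto simp: weights_def dominant_def)
qed

lemma inner_lam_minus_coroot_Ints: "a \<in> R \<Longrightarrow> lam_minus \<bullet> coroot a \<in> \<int>"
proof -
  assume "a \<in> R"
  then have "w0 a \<in> R" using weyl_in_R[OF order_refl w0_in_weyl] by blast
  then consider "w0 a \<in> pos" | "- w0 a \<in> pos" using R_pos_or_neg by blast
  then show ?thesis
    using inner_coroot_pos_Ints[of "w0 a"] inner_coroot_pos_Ints[of "- w0 a"]
    by cases (simp_all add: inner_lam_minus_coroot)
qed

definition aff_inversions :: "('a \<times> real) set" where
  "aff_inversions = {b \<in> aff_pos R I al. ext_act id lam_minus b \<in> aff_neg R I al}"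

abbreviation "level b \<equiv> fst (Phi lam_minus w0 b)"

text \<open>The inversions of level zero are the \<open>(a\<^sup>\<or>, \<langle>\<lambda>\<^sub>-, a\<^sup>\<or>\<rangle>)\<close> for the negative roots \<open>a\<close> that pair
  positively with \<open>\<lambda>\<^sub>-\<close>: the degree takes the largest value that still gives an inversion.\<close>
definition top_roots :: "'a set" where
  "top_roots = {a \<in> R. - a \<in> pos \<and> lam_minus \<bullet> coroot a > 0}"

definition top_aff_root :: "'a \<Rightarrow> 'a \<times> real" where
  "top_aff_root a = (coroot a, lam_minus \<bullet> coroot a)"

lemma aff_inversion_level:
  assumes b: "b \<in> aff_inversions"
  shows "level b \<ge> 0" and "level b = 0 \<Longrightarrow> b \<in> top_aff_root ` top_roots"
proof -
  obtain a n where an: "b = (coroot a, of_int n)" "a \<in> R" "n > 0 \<or> (n = 0 \<and> a \<in> pos)"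
    using b by (auto simp: aff_inversions_def aff_pos_def)
  define m where "m = lam_minus \<bullet> coroot a"
  have "(coroot a, of_int n - m) \<in> aff_neg R I al"
    using b by (simp add: aff_inversions_def ext_act_def an(1) m_def)
  then obtain a' n' where an': "coroot a = - coroot a'" "of_int n - m = - of_int n'"
    "n' > 0 \<or> (n' = 0 \<and> a' \<in> pos)"
    by (auto simp: aff_neg_def aff_pos_def)
  have a': "a' = - a" using an'(1) by (metis coroot_coroot coroot_minus minus_minus)
  have m: "m = of_int n + of_int n'" using an'(2) by simp
  have level: "level b = of_int n' / m" by (simp add: Phi_def an(1) m_def[symmetric] m)
  show "level b \<ge> 0" using level m an(3) an'(3) by auto
  assume "level b = 0"
  then have "n' = 0" using level m an(3) an'(3) a' uminus_pos_notin by (auto simp: divide_eq_0_iff)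
  then have "a \<in> top_roots" "b = top_aff_root a"
    using an(1,2,3) an'(3) a' m uminus_pos_notin by (auto simp: top_roots_def top_aff_root_def m_def)
  then show "b \<in> top_aff_root ` top_roots" by blast
qed

lemma top_aff_root_inversion:
  assumes a: "a \<in> top_roots"
  shows "top_aff_root a \<in> aff_inversions" and "level (top_aff_root a) = 0"
proof -
  have aR: "a \<in> R" and na: "- a \<in> pos" and pos: "lam_minus \<bullet> coroot a > 0"
    using a by (auto simp: top_roots_def)
  obtain n where n: "lam_minus \<bullet> coroot a = of_int n"
    using inner_lam_minus_coroot_Ints[OF aR] Ints_cases by metis
  have "top_aff_root a \<in> aff_pos R I al"
    unfolding aff_pos_def top_aff_root_def n using aR pos n by force
  moreover have "(coroot (- a), of_int 0) \<in> aff_pos R I al"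
    unfolding aff_pos_def using uminus_in_R[OF aR] na by blast
  then have "ext_act id lam_minus (top_aff_root a) \<in> aff_neg R I al"
    unfolding aff_neg_def by (force simp: ext_act_def top_aff_root_def)
  ultimately show "top_aff_root a \<in> aff_inversions" by (simp add: aff_inversions_def)
  show "level (top_aff_root a) = 0" by (simp add: Phi_def top_aff_root_def)
qed

lemma top_aff_root_Phi: "snd (Phi lam_minus w0 (top_aff_root a)) = w0 a"
  by (simp add: Phi_def top_aff_root_def orthogonal_transformation_coroot[OF orthogonal_transformation_w0])

lemma w0_image_top_roots: "w0 ` top_roots = \<beta> ` {1..M}"
proof -
  have w0_minus: "w0 (- x) = - w0 x" for x
    by (rule orthogonal_transformation_minus[OF orthogonal_transformation_w0])
  have "w0 ` top_roots = pos - parabolic_pos S"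
  proof (intro equalityI subsetI)
    fix c assume "c \<in> w0 ` top_roots"
    then obtain a where a: "a \<in> top_roots" "c = w0 a" by auto
    then have "c \<in> pos" using w0_pos[of "- a"] w0_minus by (simp add: top_roots_def)
    moreover have "lam \<bullet> c > 0"
      using a inner_lam_minus_coroot[of a] inner_coroot_pos_iff[of lam "w0 a"] by (simp add: top_roots_def)
    ultimately show "c \<in> pos - parabolic_pos S"
      using inner_span_stab by (force simp: parabolic_pos_def)
  next
    fix c assume c: "c \<in> pos - parabolic_pos S"
    then have "w0 c \<in> R" "- w0 c \<in> pos"
      using weyl_in_R[OF order_refl w0_in_weyl] pos_in_R w0_pos by auto
    moreover have "lam_minus \<bullet> coroot (w0 c) > 0"
      using inner_pos_outside_span[of c] c inner_lam_minus_coroot inner_coroot_pos_iff[of lam c]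
      by (simp add: parabolic_pos_def)
    ultimately have "w0 c \<in> top_roots" by (simp add: top_roots_def)
    then show "c \<in> w0 ` top_roots" by (metis image_eqI w0_w0)
  qed
  then show ?thesis using beta_image_low by simp
qed

lemma card_level_zero: "card {b \<in> aff_inversions. level b = 0} = M"
proof -
  have "{b \<in> aff_inversions. level b = 0} = top_aff_root ` top_roots"
    using aff_inversion_level top_aff_root_inversion by blast
  moreover have "inj_on top_aff_root top_roots"
    by (rule inj_onI) (auto simp: top_aff_root_def dest: coroot_inject)
  moreover have "inj_on w0 top_roots"
    using orthogonal_transformation_inj[OF orthogonal_transformation_w0] by (rule inj_on_subset) simp
  moreover have "inj_on \<beta> {1..M}"
    using inj_on_subset[OF inj_on_beta] M_le by simp
  ultimately show ?thesis
    using w0_image_top_roots by (metis card_image card_atLeastAtMost diff_Suc_1)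
qed

end

context reduced_words
begin

lemma prec'_irrefl: "\<not> prec' al is lam_minus w0 x x"
proof
  assume "prec' al is lam_minus w0 x x"
  then obtain j k where "1 \<le> j" "j < k" "k \<le> N" "\<beta> j = \<beta> k"
    by (auto simp: prec'_def succ_ord_def)
  then show False using beta_inject[of j k] by auto
qed

lemma succ_ord_chain_eq_beta:
  assumes into: "\<And>k. k \<in> {1..M} \<Longrightarrow> g k \<in> \<beta> ` {1..M}"
    and chain: "\<And>i j. 1 \<le> i \<Longrightarrow> i < j \<Longrightarrow> j \<le> M \<Longrightarrow> succ_ord al is (g i) (g j)"
    and k: "k \<in> {1..M}"
  shows "g k = \<beta> k"
proof -
  define idx where "idx k = inv_into {1..M} \<beta> (g k)" for k
  have idx: "idx k \<in> {1..M}" "\<beta> (idx k) = g k" if "k \<in> {1..M}" for k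
    using inv_into_into[OF into[OF that]] f_inv_into_f[OF into[OF that]] by (simp_all add: idx_def)
  have "strict_mono_on {1..M} idx"
  proof (rule strict_mono_onI)
    fix i j assume "i \<in> {1..M}" "j \<in> {1..M}" "i < j"
    then obtain a b where ab: "1 \<le> a" "a < b" "b \<le> N" "\<beta> a = g i" "\<beta> b = g j"
      using chain[of i j] by (auto simp: succ_ord_def)
    have "idx i = a" "idx j = b"
      using beta_inject[of "idx i" a] beta_inject[of "idx j" b] idx[OF \<open>i \<in> {1..M}\<close>]
        idx[OF \<open>j \<in> {1..M}\<close>] ab M_le
      by auto
    then show "idx i < idx j" using ab by simp
  qed
  then have "idx k = k" by (rule strict_mono_on_self_eq[OF _ _ k]) (use idx in auto)
  then show ?thesis using idx(2)[OF k] by simp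
qed

lemma sorted_enumeration_level_zero:
  assumes sorted: "sorted_wrt (prec' al is lam_minus w0) (map T [1..<L + 1])"
    and exh: "T ` {1..L} = aff_inversions"
    and k: "k \<in> {1..M}"
  shows "w0 (fst (T k)) = coroot (\<beta> k)"
proof -
  have T_inv: "T p \<in> aff_inversions" if "p \<in> {1..L}" for p
    using imageI[OF that, of T] exh by simp
  have less: "prec' al is lam_minus w0 (T i) (T j)" if "1 \<le> i" "i < j" "j \<le> L" for i j
    using sorted_wrt_map_upt_less[OF sorted that] .
  have "inj_on T {1..L}"
  proof (rule inj_onI)
    fix i j assume "i \<in> {1..L}" "j \<in> {1..L}" "T i = T j"
    then show "i = j"
      using less[of i j] less[of j i] prec'_irrefl by (cases i j rule: linorder_cases) auto
  qed
  then have "inj_on T {p \<in> {1..L}. level (T p) = 0}" by (rule inj_on_subset) auto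
  then have "card {p \<in> {1..L}. level (T p) = 0} = card (T ` {p \<in> {1..L}. level (T p) = 0})"
    by (rule card_image[symmetric])
  also have "T ` {p \<in> {1..L}. level (T p) = 0} = {b \<in> aff_inversions. level b = 0}"
    unfolding exh[symmetric] by auto
  finally have card: "card {p \<in> {1..L}. level (T p) = 0} = M"
    using card_level_zero by simp
  have "card {p \<in> {1..L}. level (T p) = 0} \<le> card {1..L}" by (rule card_mono) auto
  then have "M \<le> L" using card by simp
  have level_zero: "level (T p) = 0" if "p \<in> {1..M}" for p
  proof (rule zeros_initial_segment[OF _ _ card that])
    show "level (T i) \<le> level (T j)" if "1 \<le> i" "i < j" "j \<le> L" for i j
      using less[OF that] by (auto simp: prec'_def)
    show "level (T p) \<ge> 0" if "p \<in> {1..L}" for p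
      using aff_inversion_level(1)[OF T_inv[OF that]] .
  qed
  have "snd (Phi lam_minus w0 (T k)) = \<beta> k"
  proof (rule succ_ord_chain_eq_beta[OF _ _ k])
    fix p assume p: "p \<in> {1..M}"
    then have "T p \<in> aff_inversions" using T_inv \<open>M \<le> L\<close> by simp
    then obtain a where a: "a \<in> top_roots" "T p = top_aff_root a"
      using aff_inversion_level(2) level_zero[OF p] by blast
    then have "snd (Phi lam_minus w0 (T p)) \<in> w0 ` top_roots" by (simp add: top_aff_root_Phi)
    then show "snd (Phi lam_minus w0 (T p)) \<in> \<beta> ` {1..M}" by (simp only: w0_image_top_roots)
  next
    fix i j assume ij: "1 \<le> i" "i < j" "j \<le> M"
    then have "level (T i) = level (T j)" using level_zero[of i] level_zero[of j] by simp
    moreover have "prec' al is lam_minus w0 (T i) (T j)" using less ij \<open>M \<le> L\<close> by simp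
    ultimately show "succ_ord al is (snd (Phi lam_minus w0 (T i))) (snd (Phi lam_minus w0 (T j)))"
      by (simp add: prec'_def)
  qed
  then show ?thesis by (metis Phi_def coroot_coroot snd_conv)
qed

end

theorem corollary5p6:
  fixes R :: "'a::euclidean_space set" and I :: "'i set" and al :: "'i \<Rightarrow> 'a"
    and lam :: 'a and "is" :: "'i list" and M :: nat
    and u :: "'a \<times> real \<Rightarrow> 'a \<times> real" and ls :: "'i option list"
  assumes rs: "root_system R" and irr: "irreducible_rs R" and base: "is_base R I al"
    and dom: "lam \<in> dominant I al"
    and M_le: "M \<le> length is"
    and red_v: "reduced_expr I al (take M is)
                  (min_rep I al lam (longest I al lam))"
    and red_S: "reduced_expr I al (drop M is) (longest (stab_set I al lam) al)"
    and u_Om: "u \<in> Omega R I al"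
    and ls_I: "set ls \<subseteq> Some ` I \<union> {None}"
    and expr: "ext_act id (longest I al lam) = u \<circ> aprod al (highest_short_root R I al) ls"
    and red_t: "length ls = aff_len R I al (ext_act id (longest I al lam))"
    and sorted: "sorted_wrt (prec' al is (longest I al lam) (longest I al))
                   (map (tbeta al (highest_short_root R I al) ls) [1..<length ls + 1])"
    and exhaust: "tbeta al (highest_short_root R I al) ls ` {1..length ls} =
                   {b \<in> aff_pos R I al. ext_act id (longest I al lam) b \<in> aff_neg R I al}"
  shows "\<forall>k\<in>{1..M}. longest I al (fst (tbeta al (highest_short_root R I al) ls k))
                     = coroot (beta_root al is k)"
proof -
  interpret reduced_words R I al lam "is" M
    by unfold_locales (use rs base dom M_le red_v red_S in auto)
  show ?thesis
    using sorted_enumeration_level_zero[OF sorted exhaust[folded aff_inversions_def]] by blast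
qed

end
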